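(* Let $G$ be a reflexive graph, and suppose that an edge $vv'$ of $G$ avoids a walk $u_0u_1\dots u_t$ ($t\ge1$) in $G$. Then: 1. If neither $\{u_0,u_1,v,v'\}$ nor $\{u_{t-1},u_t,v,v'\}$ induces a $C_4$, then $(u_0,x)\sim(u_t,y)$ for all $x\in\{v,v'\}$ and $y\in\{v,v'\}$. 2. If $\{u_0,u_1,v,v'\}$ induces a $C_4$ and $\{u_{t-1},u_t,v,v'\}$ does not, then $(u_0,x)\sim(u_t,y)$ for every $y\in\{v,v'\}$, where $x$ is the unique vertex of $\{v,v'\}$ with $u_0x\in E(G)$. 3. If both $\{u_0,u_1,v,v'\}$ and $\{u_{t-1},u_t,v,v'\}$ induce a $C_4$, then $(u_0,x)\sim(u_t,y)$, where $x$ is the unique vertex of $\{v,v'\}$ with $u_0x\in E(G)$ and $y$ is the unique vertex of $\{v,v'\}$ with $u_ty\in E(G)$.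
   Context: A graph is reflexive if every vertex carries a loop; its edge set $E(G)$ contains all loops $vv$, and an "edge" $uu'$ may be a loop ($u=u'$). A walk $u_0u_1\dots u_t$ ($t\ge 1$) is a sequence of vertices with $u_ju_{j+1}\in E(G)$ for all $j$ (consecutive vertices may coincide); its edges are $u_ju_{j+1}$. $Z(G)$ is the set of ordered pairs $(u,v)$ of distinct vertices of $G$. For $(u,v),(u',v')\in Z(G)$, $(u,v)$ forces $(u',v')$, written $(u,v)\Lambda(u',v')$, if either $u=u'$ and $v=v'$, or $uu'\in E(G)$, $vv'\in E(G)$, $uv'\notin E(G)$ and $vu'\notin E(G)$. We write $(u,v)\sim(u',v')$ ($(u,v)$ implies $(u',v')$) if there are walks $w_1w_2\dots w_m$ and $z_1z_2\dots z_m$ in $G$ with $(w_1,z_1)=(u,v)$, $(w_m,z_m)=(u',v')$ and $(w_j,z_j)\Lambda(w_{j+1},z_{j+1})$ for $j=1,\dots,m-1$; this is an equivalence relation on $Z(G)$. For edges $uu'$, $vv'$ of a reflexive graph $G$ with $\{u,u'\}\cap\{v,v'\}=\emptyset$, $uu'$ avoids $vv'$ if one of the following holds: (i) $u=u'$, $v=v'$, $uv\notin E(G)$; (ii) $u=u'$, $v\ne v'$, $uv\notin E(G)$ and $uv'\notin E(G)$; (iii) $u\ne u'$, $v=v'$, $uv\notin E(G)$ and $u'v\notin E(G)$; (iv) $u\ne u'$, $v\ne v'$, and $\{u,u',v,v'\}$ induces a $2K_2$, a $P_4$, or a $C_4$ in $G$. An edge avoids a walk if it avoids every edge of the walk. 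*)

theory Defs
  imports Main
begin

definition reflexive_graph :: "'a set \<Rightarrow> ('a \<Rightarrow> 'a \<Rightarrow> bool) \<Rightarrow> bool" where
  "reflexive_graph V E \<longleftrightarrow>
     (\<forall>u v. E u v \<longrightarrow> u \<in> V \<and> v \<in> V) \<and>
     (\<forall>u v. E u v \<longrightarrow> E v u) \<and>
     (\<forall>v\<in>V. E v v)"

definition is_walk :: "'a set \<Rightarrow> ('a \<Rightarrow> 'a \<Rightarrow> bool) \<Rightarrow> 'a list \<Rightarrow> bool" where
  "is_walk V E ws \<longleftrightarrow> length ws \<ge> 2 \<and> set ws \<subseteq> V \<and>
     (\<forall>j. j + 1 < length ws \<longrightarrow> E (ws ! j) (ws ! (j + 1)))"

definition Zset :: "'a set \<Rightarrow> ('a \<times> 'a) set" where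
  "Zset V = {(u, v). u \<in> V \<and> v \<in> V \<and> u \<noteq> v}"

definition forces :: "('a \<Rightarrow> 'a \<Rightarrow> bool) \<Rightarrow> 'a \<times> 'a \<Rightarrow> 'a \<times> 'a \<Rightarrow> bool" where
  "forces E p q \<longleftrightarrow> (case p of (u, v) \<Rightarrow> case q of (u', v') \<Rightarrow>
     (u = u' \<and> v = v') \<or> (E u u' \<and> E v v' \<and> \<not> E u v' \<and> \<not> E v u'))"

definition implies_pair :: "'a set \<Rightarrow> ('a \<Rightarrow> 'a \<Rightarrow> bool) \<Rightarrow> 'a \<times> 'a \<Rightarrow> 'a \<times> 'a \<Rightarrow> bool" where
  "implies_pair V E p q \<longleftrightarrow> p \<in> Zset V \<and> q \<in> Zset V \<and>
     (\<exists>ws zs. is_walk V E ws \<and> is_walk V E zs \<and> length ws = length zs \<and>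
        (hd ws, hd zs) = p \<and> (last ws, last zs) = q \<and>
        (\<forall>j < length ws. (ws ! j, zs ! j) \<in> Zset V) \<and>
        (\<forall>j. j + 1 < length ws \<longrightarrow> forces E (ws ! j, zs ! j) (ws ! (j + 1), zs ! (j + 1))))"

definition induces_C4 :: "('a \<Rightarrow> 'a \<Rightarrow> bool) \<Rightarrow> 'a set \<Rightarrow> bool" where
  "induces_C4 E S \<longleftrightarrow> (\<exists>a b c d. S = {a, b, c, d} \<and> distinct [a, b, c, d] \<and>
     E a b \<and> E b c \<and> E c d \<and> E d a \<and> \<not> E a c \<and> \<not> E b d)"

definition induces_P4 :: "('a \<Rightarrow> 'a \<Rightarrow> bool) \<Rightarrow> 'a set \<Rightarrow> bool" where
  "induces_P4 E S \<longleftrightarrow> (\<exists>a b c d. S = {a, b, c, d} \<and> distinct [a, b, c, d] \<and>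
     E a b \<and> E b c \<and> E c d \<and> \<not> E a c \<and> \<not> E b d \<and> \<not> E a d)"

definition induces_2K2 :: "('a \<Rightarrow> 'a \<Rightarrow> bool) \<Rightarrow> 'a set \<Rightarrow> bool" where
  "induces_2K2 E S \<longleftrightarrow> (\<exists>a b c d. S = {a, b, c, d} \<and> distinct [a, b, c, d] \<and>
     E a b \<and> E c d \<and> \<not> E a c \<and> \<not> E a d \<and> \<not> E b c \<and> \<not> E b d)"

definition avoids :: "('a \<Rightarrow> 'a \<Rightarrow> bool) \<Rightarrow> 'a \<times> 'a \<Rightarrow> 'a \<times> 'a \<Rightarrow> bool" where
  "avoids E e f \<longleftrightarrow> (case e of (u, u') \<Rightarrow> case f of (v, v') \<Rightarrow>
     E u u' \<and> E v v' \<and> {u, u'} \<inter> {v, v'} = {} \<and>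
     ((u = u' \<and> v = v' \<and> \<not> E u v) \<or>
      (u = u' \<and> v \<noteq> v' \<and> \<not> E u v \<and> \<not> E u v') \<or>
      (u \<noteq> u' \<and> v = v' \<and> \<not> E u v \<and> \<not> E u' v) \<or>
      (u \<noteq> u' \<and> v \<noteq> v' \<and>
        (induces_2K2 E {u, u', v, v'} \<or> induces_P4 E {u, u', v, v'} \<or> induces_C4 E {u, u', v, v'}))))"

definition avoids_walk :: "('a \<Rightarrow> 'a \<Rightarrow> bool) \<Rightarrow> 'a \<times> 'a \<Rightarrow> 'a list \<Rightarrow> bool" where
  "avoids_walk E e ws \<longleftrightarrow> (\<forall>j. j + 1 < length ws \<longrightarrow> avoids E e (ws ! j, ws ! (j + 1)))"

end

theory Submission
  imports Defs
begin

(* Since vv' avoids the edge u_j u_{j+1}, no vertex of either edge is adjacent to both ends of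
   the other, and unless {u_j, u_{j+1}, v, v'} induces a C4 at most one of u_j, u_{j+1} has a
   neighbour in {v, v'}. Hence (u_j, x) ~ (u_{j+1}, y) for all x, y in {v, v'} by at most two
   forcing steps, moving the second coordinate while the first sits at a vertex without such
   neighbour; in the C4 case the neighbours x of u_j and y of u_{j+1} give a single forcing step.
   Chaining along the walk, each interior vertex lying on an induced C4 is paired with its
   unique neighbour in {v, v'}. *)

lemma reflexive_graph_symp: "reflexive_graph V E \<Longrightarrow> symp E"
  unfolding reflexive_graph_def by (blast intro: sympI)

lemma avoids_sym:
  assumes "symp E" and "avoids E e f"
  shows "avoids E f e"
proof -
  obtain u u' v v' where "e = (u, u')" "f = (v, v')" by fastforce
  moreover have "{v, v', u, u'} = {u, u', v, v'}" by blast
  ultimately show ?thesis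
    using assms by (auto simp: avoids_def dest: sympD)
qed

lemma induces_2K2_P4_C4_triangle_free:
  assumes "symp E" and "induces_2K2 E S \<or> induces_P4 E S \<or> induces_C4 E S"
    and "{p, q, r} \<subseteq> S" and "distinct [p, q, r]"
  shows "\<not> (E p q \<and> E q r \<and> E p r)"
  using assms unfolding induces_2K2_def induces_P4_def induces_C4_def
  by (elim disjE exE conjE) (auto dest: sympD)

lemma avoids_not_adjacent_to_both:
  assumes "symp E" and av: "avoids E (u, u') (v, v')" and w: "w \<in> {v, v'}"
  shows "\<not> (E w u \<and> E w u')"
proof
  assume adj: "E w u \<and> E w u'"
  have disj: "{u, u'} \<inter> {v, v'} = {}" and "E u u'" using av by (auto simp: avoids_def)
  show False
  proof (cases "u \<noteq> u' \<and> v \<noteq> v'")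
    case True
    then have "induces_2K2 E {u, u', v, v'} \<or> induces_P4 E {u, u', v, v'} \<or> induces_C4 E {u, u', v, v'}"
      using av by (auto simp: avoids_def)
    from induces_2K2_P4_C4_triangle_free[OF \<open>symp E\<close> this, of w u u']
    show False using True adj w disj \<open>E u u'\<close> by auto
  next
    case False
    then show False using av adj w by (auto simp: avoids_def dest: sympD[OF \<open>symp E\<close>])
  qed
qed

lemma avoids_cross_edges_induce_C4:
  assumes "symp E" and av: "avoids E (v, v') (a, b)"
    and x: "x \<in> {v, v'}" and y: "y \<in> {v, v'}" and "E a x" and "E b y"
  shows "induces_C4 E {a, b, v, v'}"
proof -
  have "E a b" "E v v'" and disj: "{v, v'} \<inter> {a, b} = {}" using av by (auto simp: avoids_def)
  have a_side: "\<not> (E w v \<and> E w v')" if "w \<in> {a, b}" for w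
    using avoids_not_adjacent_to_both[OF \<open>symp E\<close> av that] .
  have v_side: "\<not> (E w a \<and> E w b)" if "w \<in> {v, v'}" for w
    using avoids_not_adjacent_to_both[OF \<open>symp E\<close> avoids_sym[OF \<open>symp E\<close> av] that] .
  have "x \<noteq> y" using v_side[OF x] \<open>E a x\<close> \<open>E b y\<close> \<open>symp E\<close> by (auto dest: sympD)
  then have xy: "(x = v \<and> y = v') \<or> (x = v' \<and> y = v)" using x y by auto
  have "a \<noteq> b" "\<not> E a y" "\<not> E b x" using a_side \<open>E a x\<close> \<open>E b y\<close> xy by auto
  moreover have "distinct [a, b, y, x]" using \<open>a \<noteq> b\<close> \<open>x \<noteq> y\<close> x y disj by auto
  moreover have "{a, b, v, v'} = {a, b, y, x}" using xy by blast
  moreover have "E y x" "E x a"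
    using xy \<open>E v v'\<close> \<open>E a x\<close> \<open>symp E\<close> by (auto dest: sympD)
  ultimately show ?thesis unfolding induces_C4_def
    using \<open>E a b\<close> \<open>E b y\<close> by blast
qed

lemma induces_C4_two_neighbours:
  assumes "symp E" and "induces_C4 E S" and "w \<in> S"
  shows "\<exists>n\<^sub>1\<in>S. \<exists>n\<^sub>2\<in>S. distinct [w, n\<^sub>1, n\<^sub>2] \<and> E w n\<^sub>1 \<and> E w n\<^sub>2"
proof -
  obtain a b c d where S: "S = {a, b, c, d}" and "distinct [a, b, c, d]"
    and "E a b" "E b c" "E c d" "E d a"
    using assms(2) unfolding induces_C4_def by blast
  moreover from this have "E b a" "E c b" "E d c" "E a d" using \<open>symp E\<close> by (auto dest: sympD)
  ultimately show ?thesis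
    using \<open>w \<in> S\<close> unfolding S by (elim insertE emptyE) (force+)
qed

lemma avoids_C4_ex1_neighbour:
  assumes "symp E" and av: "avoids E (v, v') (a, b)"
    and C4: "induces_C4 E {a, b, v, v'}" and w: "w \<in> {a, b}"
  shows "\<exists>!z. z \<in> {v, v'} \<and> E w z"
proof -
  obtain n\<^sub>1 n\<^sub>2 where "{n\<^sub>1, n\<^sub>2} \<subseteq> {a, b, v, v'}" "distinct [w, n\<^sub>1, n\<^sub>2]" "E w n\<^sub>1" "E w n\<^sub>2"
    using induces_C4_two_neighbours[OF \<open>symp E\<close> C4, of w] w by auto
  then have "\<exists>z. z \<in> {v, v'} \<and> E w z" using w by auto
  moreover have "\<not> (E w v \<and> E w v')" using avoids_not_adjacent_to_both[OF \<open>symp E\<close> av w] .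
  ultimately show ?thesis by blast
qed

text \<open>As \<open>forces\<close> is reflexive, \<open>(forces_in V E)\<^sup>+\<^sup>+\<close> is the relation \<open>\<sim>\<close> on \<open>Z(G)\<close>.\<close>

definition forces_in :: "'a set \<Rightarrow> ('a \<Rightarrow> 'a \<Rightarrow> bool) \<Rightarrow> 'a \<times> 'a \<Rightarrow> 'a \<times> 'a \<Rightarrow> bool" where
  "forces_in V E p q \<longleftrightarrow> p \<in> Zset V \<and> q \<in> Zset V \<and> forces E p q"

lemma forces_in_edges:
  assumes "reflexive_graph V E" and "forces_in V E (a, b) (a', b')"
  shows "E a a'" and "E b b'"
  using assms unfolding forces_in_def forces_def reflexive_graph_def Zset_def by auto

lemma is_walk_Cons:
  assumes "reflexive_graph V E" and "is_walk V E ws" and "E a (hd ws)"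
  shows "is_walk V E (a # ws)"
  using assms unfolding is_walk_def reflexive_graph_def
  by (auto simp: nth_Cons hd_conv_nth split: nat.split)

lemma implies_pair_refl:
  assumes "reflexive_graph V E" and "p \<in> Zset V"
  shows "implies_pair V E p p"
proof -
  obtain a b where p: "p = (a, b)" and "a \<in> V" "b \<in> V" using assms(2) by (auto simp: Zset_def)
  then have "is_walk V E [a, a]" "is_walk V E [b, b]"
    using assms(1) by (auto simp: is_walk_def reflexive_graph_def less_Suc_eq)
  then show ?thesis unfolding implies_pair_def using assms(2) p
    by (intro conjI exI[of _ "[a, a]"] exI[of _ "[b, b]"]) (auto simp: forces_def less_Suc_eq)
qed

lemma implies_pair_Cons:
  assumes G: "reflexive_graph V E" and f: "forces_in V E (a, b) q" and imp: "implies_pair V E q r"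
  shows "implies_pair V E (a, b) r"
proof -
  obtain ws zs where walks: "is_walk V E ws" "is_walk V E zs" "length ws = length zs"
    and hd: "(hd ws, hd zs) = q" and last: "(last ws, last zs) = r"
    and Z: "\<forall>j < length ws. (ws ! j, zs ! j) \<in> Zset V"
    and F: "\<forall>j. j + 1 < length ws \<longrightarrow> forces E (ws ! j, zs ! j) (ws ! (j + 1), zs ! (j + 1))"
    using imp unfolding implies_pair_def by blast
  have ne: "ws \<noteq> []" "zs \<noteq> []" using walks by (auto simp: is_walk_def)
  have "E a (hd ws)" "E b (hd zs)" using forces_in_edges[OF G] f hd by blast+
  then have "is_walk V E (a # ws)" "is_walk V E (b # zs)" using is_walk_Cons[OF G] walks by auto
  moreover have "\<forall>j < length (a # ws). ((a # ws) ! j, (b # zs) ! j) \<in> Zset V"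
    using Z f by (auto simp: forces_in_def nth_Cons split: nat.split)
  moreover have "\<forall>j. j + 1 < length (a # ws) \<longrightarrow>
      forces E ((a # ws) ! j, (b # zs) ! j) ((a # ws) ! (j + 1), (b # zs) ! (j + 1))"
    using F f hd ne by (auto simp: forces_in_def nth_Cons hd_conv_nth split: nat.split)
  ultimately show ?thesis
    using walks(3) last ne f imp unfolding implies_pair_def forces_in_def
    by (intro conjI exI[of _ "a # ws"] exI[of _ "b # zs"]) auto
qed

lemma tranclp_forces_in_implies_pair:
  assumes "reflexive_graph V E" and "(forces_in V E)\<^sup>+\<^sup>+ p q"
  shows "implies_pair V E p q"
  using assms(2)
proof (induction rule: converse_tranclp_induct)
  case (base p)
  then show ?case
    using implies_pair_Cons[OF assms(1)] implies_pair_refl[OF assms(1)]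
    by (metis forces_in_def surj_pair)
next
  case (step p q)
  then show ?case using implies_pair_Cons[OF assms(1)] by (metis surj_pair)
qed

lemma avoided_edge_tranclp_forces_in:
  assumes G: "reflexive_graph V E" and av: "avoids E (v, v') (a, b)"
    and x: "x \<in> {v, v'}" and y: "y \<in> {v, v'}"
    and C4_x: "induces_C4 E {a, b, v, v'} \<Longrightarrow> E a x"
    and C4_y: "induces_C4 E {a, b, v, v'} \<Longrightarrow> E b y"
  shows "(forces_in V E)\<^sup>+\<^sup>+ (a, x) (b, y)"
proof -
  have "symp E" using G by (rule reflexive_graph_symp)
  have "E a b" "E v v'" and disj: "{v, v'} \<inter> {a, b} = {}" using av by (auto simp: avoids_def)
  have in_V: "{a, b, v, v'} \<subseteq> V" and loop: "\<And>p. p \<in> V \<Longrightarrow> E p p"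
    using G \<open>E a b\<close> \<open>E v v'\<close> by (auto simp: reflexive_graph_def)
  have a_side: "\<not> (E w v \<and> E w v')" if "w \<in> {a, b}" for w
    using avoids_not_adjacent_to_both[OF \<open>symp E\<close> av that] .
  have v_side: "\<not> (E z a \<and> E z b)" if "z \<in> {v, v'}" for z
    using avoids_not_adjacent_to_both[OF \<open>symp E\<close> avoids_sym[OF \<open>symp E\<close> av] that] .
  have step: "forces_in V E (p, z) (q, z')"
    if "p \<in> {a, b}" "q \<in> {a, b}" "z \<in> {v, v'}" "z' \<in> {v, v'}" "E p q" "\<not> E p z'" "\<not> E q z"
    for p q z z'
  proof -
    have "E z z'" using that(3,4) \<open>E v v'\<close> \<open>symp E\<close> loop in_V by (auto dest: sympD)
    then show ?thesis
      using that disj in_V \<open>symp E\<close> unfolding forces_in_def forces_def Zset_def by (auto dest: sympD)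
  qed
  show ?thesis
  proof (cases "induces_C4 E {a, b, v, v'}")
    case True
    have "\<not> E a y" "\<not> E b x" using a_side v_side C4_x[OF True] C4_y[OF True] x y \<open>symp E\<close>
      by (auto dest: sympD)
    then show ?thesis using x y \<open>E a b\<close> by (intro tranclp.r_into_trancl step) auto
  next
    case False
    \<comment> \<open>at a vertex without neighbour in \<open>{v, v'}\<close> the second coordinate moves freely\<close>
    then have "(\<forall>z \<in> {v, v'}. \<not> E a z) \<or> (\<forall>z \<in> {v, v'}. \<not> E b z)"
      using avoids_cross_edges_induce_C4[OF \<open>symp E\<close> av] by blast
    then show ?thesis
    proof
      assume a_free: "\<forall>z \<in> {v, v'}. \<not> E a z"
      obtain x\<^sub>0 where "x\<^sub>0 \<in> {v, v'}" "\<not> E b x\<^sub>0" using a_side[of b] by blast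
      then have "forces_in V E (a, x) (a, x\<^sub>0)" "forces_in V E (a, x\<^sub>0) (b, y)"
        using a_free x y \<open>E a b\<close> loop in_V by (auto intro!: step)
      then show ?thesis by (meson tranclp.r_into_trancl tranclp.trancl_into_trancl)
    next
      assume b_free: "\<forall>z \<in> {v, v'}. \<not> E b z"
      obtain y\<^sub>0 where "y\<^sub>0 \<in> {v, v'}" "\<not> E a y\<^sub>0" using a_side[of a] by blast
      then have "forces_in V E (a, x) (b, y\<^sub>0)" "forces_in V E (b, y\<^sub>0) (b, y)"
        using b_free x y \<open>E a b\<close> loop in_V by (auto intro!: step)
      then show ?thesis by (meson tranclp.r_into_trancl tranclp.trancl_into_trancl)
    qed
  qed
qed

lemma avoided_walk_tranclp_forces_in:
  assumes G: "reflexive_graph V E"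
    and av: "\<And>j. j \<le> n \<Longrightarrow> avoids E (v, v') (u j, u (Suc j))"
    and x: "x \<in> {v, v'}" "induces_C4 E {u 0, u 1, v, v'} \<Longrightarrow> E (u 0) x"
    and y: "y \<in> {v, v'}" "induces_C4 E {u n, u (Suc n), v, v'} \<Longrightarrow> E (u (Suc n)) y"
  shows "(forces_in V E)\<^sup>+\<^sup>+ (u 0, x) (u (Suc n), y)"
  using av y
proof (induction n arbitrary: y)
  case 0
  then show ?case using avoided_edge_tranclp_forces_in[OF G _ x(1) _ x(2)] by simp
next
  case (Suc n)
  let ?C4_in = "induces_C4 E {u n, u (Suc n), v, v'}"
  let ?C4_out = "induces_C4 E {u (Suc n), u (Suc (Suc n)), v, v'}"
  have "symp E" using G by (rule reflexive_graph_symp)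
  obtain z where z: "z \<in> {v, v'}" and z_nbr: "?C4_in \<or> ?C4_out \<Longrightarrow> E (u (Suc n)) z"
    using avoids_C4_ex1_neighbour[OF \<open>symp E\<close> Suc.prems(1)[of n], of "u (Suc n)"]
      avoids_C4_ex1_neighbour[OF \<open>symp E\<close> Suc.prems(1)[of "Suc n"], of "u (Suc n)"]
    by (metis insertCI le_SucI order_refl)
  have "(forces_in V E)\<^sup>+\<^sup>+ (u 0, x) (u (Suc n), z)"
    using Suc.IH[OF _ z] Suc.prems(1) z_nbr by simp
  moreover have "(forces_in V E)\<^sup>+\<^sup>+ (u (Suc n), z) (u (Suc (Suc n)), y)"
    using avoided_edge_tranclp_forces_in[OF G Suc.prems(1)[of "Suc n"] z Suc.prems(2)]
      z_nbr Suc.prems(3)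
    by simp
  ultimately show ?case by (rule tranclp_trans)
qed

theorem lemma5:
  fixes V :: "'a set" and E :: "'a \<Rightarrow> 'a \<Rightarrow> bool" and us :: "'a list" and v v' :: 'a
  assumes G: "reflexive_graph V E"
    and W: "is_walk V E us"
    and e: "E v v'"
    and av: "avoids_walk E (v, v') us"
  defines "t \<equiv> length us - 1"
  shows
    "(\<not> induces_C4 E {us ! 0, us ! 1, v, v'} \<and> \<not> induces_C4 E {us ! (t - 1), us ! t, v, v'}
       \<longrightarrow> (\<forall>x\<in>{v, v'}. \<forall>y\<in>{v, v'}. implies_pair V E (us ! 0, x) (us ! t, y)))
   \<and> (induces_C4 E {us ! 0, us ! 1, v, v'} \<and> \<not> induces_C4 E {us ! (t - 1), us ! t, v, v'}
       \<longrightarrow> (\<forall>y\<in>{v, v'}. implies_pair V E (us ! 0, THE x. x \<in> {v, v'} \<and> E (us ! 0) x) (us ! t, y)))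
   \<and> (induces_C4 E {us ! 0, us ! 1, v, v'} \<and> induces_C4 E {us ! (t - 1), us ! t, v, v'}
       \<longrightarrow> implies_pair V E (us ! 0, THE x. x \<in> {v, v'} \<and> E (us ! 0) x)
                            (us ! t, THE y. y \<in> {v, v'} \<and> E (us ! t) y))"
proof -
  have "symp E" using G by (rule reflexive_graph_symp)
  define n where "n = t - 1"
  have t: "t = Suc n" using W unfolding t_def n_def is_walk_def by auto
  have av_n: "avoids E (v, v') (us ! j, us ! Suc j)" if "j \<le> n" for j
    using av that W unfolding avoids_walk_def is_walk_def t_def n_def by auto
  have implies: "implies_pair V E (us ! 0, x) (us ! t, y)"
    if "x \<in> {v, v'}" "induces_C4 E {us ! 0, us ! 1, v, v'} \<Longrightarrow> E (us ! 0) x"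
       "y \<in> {v, v'}" "induces_C4 E {us ! (t - 1), us ! t, v, v'} \<Longrightarrow> E (us ! t) y" for x y
    using avoided_walk_tranclp_forces_in[where u = "nth us", OF G av_n] that
      tranclp_forces_in_implies_pair[OF G]
    unfolding t by simp
  have the_neighbour:
    "(THE z. z \<in> {v, v'} \<and> E (us ! j) z) \<in> {v, v'} \<and> E (us ! j) (THE z. z \<in> {v, v'} \<and> E (us ! j) z)"
    if "induces_C4 E {us ! i, us ! Suc i, v, v'}" "i \<le> n" "j \<in> {i, Suc i}" for i j
    using theI'[OF avoids_C4_ex1_neighbour[OF \<open>symp E\<close> av_n that(1)]] that by auto
  show ?thesis
    using implies the_neighbour[of 0 0] the_neighbour[of n "Suc n"] unfolding t by auto
qed

end
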